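(* Let $\mathbf{k}$ be a field, $p\ge3$ an integer, and let $\varphi:\mathbf{k}[e_1,\dots,e_{2p}]\to\mathbf{k}[u_1,\dots,u_p,\alpha]$ be the $\mathbf{k}$-algebra homomorphism with $\varphi(e_i)=u_i$ for $1\le i\le p-1$, $\varphi(e_p)=u_p+\alpha$, and $\varphi(e_i)=u_{i-p}\alpha$ for $p+1\le i\le 2p$. Let $\mathcal{A}=\operatorname{Im}(\varphi)$. Then for each $1\le i\le p-1$ and each $j\ge1$, the monomial $u_i\alpha^j$ lies in $\mathcal{A}$ (and hence in the initial algebra $\mathrm{in}(\mathcal{A})$ with respect to any monomial order).
   Context: For a monomial order on $\mathbf{k}[u_1,\dots,u_p,\alpha]$, the initial algebra $\mathrm{in}(\mathcal{A})$ is the $\mathbf{k}$-span of the leading monomials of the nonzero elements of $\mathcal{A}$. *)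

theory Defs
  imports Main "HOL-Library.Poly_Mapping"
begin

text \<open>Commutative polynomials over 'a in variables X_0, X_1, ...:
  a polynomial is a finitely supported map from monomials (exponent vectors, finitely supported nat to nat) to coefficients.  Here X_0 plays the role of alpha and
  X_i (1 <= i <= p) plays the role of u_i.\<close>

type_synonym 'a mpoly = "(nat \<Rightarrow>\<^sub>0 nat) \<Rightarrow>\<^sub>0 'a"

definition Var :: "nat \<Rightarrow> 'a::comm_semiring_1 mpoly" where
  "Var i = Poly_Mapping.single (Poly_Mapping.single i 1) 1"

definition Const :: "'a::comm_semiring_1 \<Rightarrow> 'a mpoly" where
  "Const c = Poly_Mapping.single 0 c"

abbreviation alpha :: "'a::comm_semiring_1 mpoly" where
  "alpha \<equiv> Var 0"

inductive_set subalg_gen :: "'a::comm_semiring_1 mpoly set \<Rightarrow> 'a mpoly set"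
  for G where
  const: "Const c \<in> subalg_gen G"
| gen: "g \<in> G \<Longrightarrow> g \<in> subalg_gen G"
| add: "a \<in> subalg_gen G \<Longrightarrow> b \<in> subalg_gen G \<Longrightarrow> a + b \<in> subalg_gen G"
| mult: "a \<in> subalg_gen G \<Longrightarrow> b \<in> subalg_gen G \<Longrightarrow> a * b \<in> subalg_gen G"

definition phi_gen :: "nat \<Rightarrow> nat \<Rightarrow> 'a::comm_semiring_1 mpoly" where
  "phi_gen p i =
     (if i \<le> p - 1 then Var i
      else if i = p then Var p + alpha
      else Var (i - p) * alpha)"

text \<open>Image of the k-algebra homomorphism phi: the subalgebra generated by
  the images of the variables e_1, ..., e_2p.\<close>
definition imgA :: "nat \<Rightarrow> 'a::comm_semiring_1 mpoly set" where
  "imgA p = subalg_gen (phi_gen p ` {1..2*p})"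

end

theory Submission
  imports Defs
begin

text \<open>The generators \<open>u\<^sub>p + \<alpha>\<close> and \<open>u\<^sub>p \<alpha>\<close> are the elementary symmetric
  functions of \<open>u\<^sub>p\<close> and \<open>\<alpha>\<close>, so the powers of \<open>\<alpha>\<close> obey the recurrence
  \<open>\<alpha>^(n+2) = (u\<^sub>p + \<alpha>) \<alpha>^(n+1) - u\<^sub>p \<alpha> \<alpha>^n\<close>.  Multiplied by \<open>u\<^sub>i\<close>, it produces
  every \<open>u\<^sub>i \<alpha>^j\<close> from the generators \<open>u\<^sub>i\<close> and \<open>u\<^sub>i \<alpha>\<close>.\<close>

lemma Const_eq_minus_one: "Const (-1) = (-1 :: 'a::comm_ring_1 mpoly)"
  unfolding Const_def one_poly_mapping.abs_eq[symmetric] by (simp add: single_uminus)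

lemma subalg_gen_uminus:
  assumes "a \<in> subalg_gen G"
  shows "- (a :: 'a::comm_ring_1 mpoly) \<in> subalg_gen G"
  using subalg_gen.mult[OF subalg_gen.const assms, of "-1"] by (simp add: Const_eq_minus_one)

lemma subalg_gen_diff:
  assumes "a \<in> subalg_gen G" and "b \<in> subalg_gen G"
  shows "(a :: 'a::comm_ring_1 mpoly) - b \<in> subalg_gen G"
  using subalg_gen.add[OF assms(1) subalg_gen_uminus[OF assms(2)]] by simp

lemma subalg_gen_mult_power:
  fixes x a b :: "'a::comm_ring_1 mpoly"
  assumes "x \<in> subalg_gen G" and "x * a \<in> subalg_gen G"
    and "b + a \<in> subalg_gen G" and "b * a \<in> subalg_gen G"
  shows "x * a ^ n \<in> subalg_gen G"
proof (induction n rule: induct_nat_012)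
  case 0
  show ?case using assms(1) by simp
next
  case 1
  show ?case using assms(2) by simp
next
  case (ge2 n)
  have "x * a ^ Suc (Suc n) = (b + a) * (x * a ^ Suc n) - (b * a) * (x * a ^ n)"
    by (simp add: algebra_simps)
  then show ?case
    using ge2 assms(3,4) by (simp add: subalg_gen.mult subalg_gen_diff)
qed

theorem lemma6p3:
  fixes p i j :: nat
  assumes "3 \<le> p" and "1 \<le> i" and "i \<le> p - 1" and "1 \<le> j"
  shows "(Var i * alpha ^ j :: 'a::field mpoly) \<in> imgA p"
proof -
  have gen: "phi_gen p k \<in> (imgA p :: 'a mpoly set)" if "1 \<le> k" and "k \<le> 2 * p" for k
    unfolding imgA_def using that by (intro subalg_gen.gen) auto
  have "phi_gen p i = (Var i :: 'a mpoly)"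
    and "phi_gen p (p + i) = (Var i * alpha :: 'a mpoly)"
    and "phi_gen p p = (Var p + alpha :: 'a mpoly)"
    and "phi_gen p (2 * p) = (Var p * alpha :: 'a mpoly)"
    using assms by (auto simp: phi_gen_def)
  then have "(Var i :: 'a mpoly) \<in> imgA p" and "(Var i * alpha :: 'a mpoly) \<in> imgA p"
    and "(Var p + alpha :: 'a mpoly) \<in> imgA p" and "(Var p * alpha :: 'a mpoly) \<in> imgA p"
    using assms gen[of i] gen[of "p + i"] gen[of p] gen[of "2 * p"] by auto
  then show ?thesis
    unfolding imgA_def by (rule subalg_gen_mult_power)
qed

end
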